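(* For every $1 \leqslant m \leqslant n$, $$\textup{Var}\big( q_m - q_{m-1} \big) \, \leqslant \, \mathbb{E}\big[ \textup{Inf}_m\big( f_R^\eta \big)^2 \big].$$
   Context: Let $R$ be a rectangle with sides parallel to the axes, let $\eta_1,\ldots,\eta_n$ be chosen independently and uniformly at random in $R$, $\eta = \{\eta_1,\ldots,\eta_n\}$, and let $\omega \colon \eta \to \{-1,1\}$ be a uniformly random colouring. The Voronoi cell of $u \in \eta$ is $C(u) = \{ x \in R : \|u - x\|_2 \leqslant \|v - x\|_2 \ \forall v \in \eta\}$; it is red if $\omega(u)=1$, blue otherwise. $H_R$ is the event that there is a path in $R$ from its left-hand side to its right-hand side intersecting only red cells; $f_R^\eta$ is its indicator as a function of $\omega$, and $\textup{Inf}_m(f_R^\eta) = \mathbb{P}( f_R^\eta(\omega) \neq f_R^\eta(\omega') \,|\, \eta )$, where $\omega'$ is $\omega$ with the colour of $\eta_m$ flipped. Let $q^\eta = \mathbb{P}(H_R \,|\, \eta)$, let $\mathcal{F}_m$ be the $\sigma$-algebra generated by $\eta_1,\ldots,\eta_m$, and $q_m = \mathbb{E}[q^\eta \,|\, \mathcal{F}_m]$ for $0 \leqslant m \leqslant n$. *)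

theory Defs
  imports "HOL-Probability.Probability"
begin

definition rect :: "real \<Rightarrow> real \<Rightarrow> real \<Rightarrow> real \<Rightarrow> (real \<times> real) set" where
  "rect a1 a2 b1 b2 = cbox (a1, a2) (b1, b2)"

definition vcell :: "(real \<times> real) set \<Rightarrow> nat \<Rightarrow> (nat \<Rightarrow> real \<times> real) \<Rightarrow> nat \<Rightarrow> (real \<times> real) set" where
  "vcell R n \<eta> u = {x \<in> R. \<forall>v\<in>{1..n}. dist (\<eta> u) x \<le> dist (\<eta> v) x}"

text \<open>The event H_R: a path in R from the left side to the right side of R
  such that every cell it intersects is red (omega u = True means red).\<close>
definition red_crossing :: "real \<Rightarrow> real \<Rightarrow> real \<Rightarrow> real \<Rightarrow> nat \<Rightarrow> (nat \<Rightarrow> real \<times> real) \<Rightarrow> (nat \<Rightarrow> bool) \<Rightarrow> bool" where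
  "red_crossing a1 a2 b1 b2 n \<eta> \<omega> \<longleftrightarrow>
     (\<exists>\<gamma>. path \<gamma> \<and> path_image \<gamma> \<subseteq> rect a1 a2 b1 b2 \<and>
          fst (pathstart \<gamma>) = a1 \<and> fst (pathfinish \<gamma>) = b1 \<and>
          (\<forall>u\<in>{1..n}. path_image \<gamma> \<inter> vcell (rect a1 a2 b1 b2) n \<eta> u \<noteq> {} \<longrightarrow> \<omega> u))"

definition fR :: "real \<Rightarrow> real \<Rightarrow> real \<Rightarrow> real \<Rightarrow> nat \<Rightarrow> (nat \<Rightarrow> real \<times> real) \<Rightarrow> (nat \<Rightarrow> bool) \<Rightarrow> real" where
  "fR a1 a2 b1 b2 n \<eta> \<omega> = (if red_crossing a1 a2 b1 b2 n \<eta> \<omega> then 1 else 0)"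

definition colourings :: "nat \<Rightarrow> (nat \<Rightarrow> bool) set" where
  "colourings n = PiE {1..n} (\<lambda>_. UNIV)"

definition colour_pmf :: "nat \<Rightarrow> (nat \<Rightarrow> bool) pmf" where
  "colour_pmf n = pmf_of_set (colourings n)"

definition qeta :: "real \<Rightarrow> real \<Rightarrow> real \<Rightarrow> real \<Rightarrow> nat \<Rightarrow> (nat \<Rightarrow> real \<times> real) \<Rightarrow> real" where
  "qeta a1 a2 b1 b2 n \<eta> = measure_pmf.prob (colour_pmf n) {\<omega>. red_crossing a1 a2 b1 b2 n \<eta> \<omega>}"

definition infl :: "real \<Rightarrow> real \<Rightarrow> real \<Rightarrow> real \<Rightarrow> nat \<Rightarrow> nat \<Rightarrow> (nat \<Rightarrow> real \<times> real) \<Rightarrow> real" where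
  "infl a1 a2 b1 b2 n m \<eta> = measure_pmf.prob (colour_pmf n)
     {\<omega>. fR a1 a2 b1 b2 n \<eta> \<omega> \<noteq> fR a1 a2 b1 b2 n \<eta> (fun_upd \<omega> m (\<not> \<omega> m))}"

definition eta_space :: "real \<Rightarrow> real \<Rightarrow> real \<Rightarrow> real \<Rightarrow> nat \<Rightarrow> (nat \<Rightarrow> real \<times> real) measure" where
  "eta_space a1 a2 b1 b2 n = PiM {1..n} (\<lambda>_. uniform_measure lborel (rect a1 a2 b1 b2))"

definition filt :: "real \<Rightarrow> real \<Rightarrow> real \<Rightarrow> real \<Rightarrow> nat \<Rightarrow> nat \<Rightarrow> (nat \<Rightarrow> real \<times> real) measure" where
  "filt a1 a2 b1 b2 n m = vimage_algebra (space (eta_space a1 a2 b1 b2 n))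
      (\<lambda>\<eta>. restrict \<eta> {1..m}) (PiM {1..m} (\<lambda>_. borel))"

definition qm :: "real \<Rightarrow> real \<Rightarrow> real \<Rightarrow> real \<Rightarrow> nat \<Rightarrow> nat \<Rightarrow> (nat \<Rightarrow> real \<times> real) \<Rightarrow> real" where
  "qm a1 a2 b1 b2 n m = real_cond_exp (eta_space a1 a2 b1 b2 n) (filt a1 a2 b1 b2 n m) (qeta a1 a2 b1 b2 n)"

end

theory Submission
  imports Defs
begin

text \<open>Let \<open>q'\<close> be the crossing probability computed after deleting the point \<open>\<eta>\<^sub>m\<close>.
  Deleting a site can only create a red crossing if the site was blue, and only destroy one if it
  was red; so whenever deletion changes the outcome, flipping the colour of \<open>\<eta>\<^sub>m\<close> changes it
  too, and \<open>\<bar>q\<^sup>\<eta> - q'\<bar> \<le> Inf\<^sub>m\<close>. As \<open>q'\<close> does not depend on \<open>\<eta>\<^sub>m\<close> and the points are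
  independent, \<open>E[q' | F\<^sub>m] = E[q' | F\<^sub>m\<^sub>-\<^sub>1]\<close>. Hence \<open>q\<^sub>m - q\<^sub>m\<^sub>-\<^sub>1\<close> is the martingale
  increment of \<open>q\<^sup>\<eta> - q'\<close>, whose variance is at most \<open>E[(q\<^sup>\<eta> - q')\<^sup>2] \<le> E[Inf\<^sub>m\<^sup>2]\<close>.

  Measurability in \<open>\<eta>\<close> comes from openness of the crossing event: a witnessing path keeps a
  positive margin from every blue cell, and this margin survives small moves of the points.\<close>

section \<open>Measures and conditional expectation\<close>

lemma (in finite_measure) abs_measure_diff_le:
  assumes "A \<in> sets M" "B \<in> sets M" "C \<in> sets M" "A \<subseteq> B \<union> C" "B \<subseteq> A \<union> C"
  shows "\<bar>measure M A - measure M B\<bar> \<le> measure M C"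
proof -
  have "measure M A \<le> measure M B + measure M C" "measure M B \<le> measure M A + measure M C"
    using assms by (auto intro!: order.trans[OF finite_measure_mono measure_Un_le])
  then show ?thesis by linarith
qed

lemma (in prob_space) abs_integral_le_const:
  fixes f :: "'a \<Rightarrow> real"
  assumes "f \<in> borel_measurable M" and "AE x in M. \<bar>f x\<bar> \<le> c"
  shows "\<bar>expectation f\<bar> \<le> c"
proof -
  have "integrable M (\<lambda>x. \<bar>f x\<bar>)"
    using assms by (intro integrable_const_bound[where B=c]) auto
  then have "(\<integral>x. \<bar>f x\<bar> \<partial>M) \<le> c"
    using assms(2) by (rule integral_le_const)
  moreover have "\<bar>expectation f\<bar> \<le> (\<integral>x. \<bar>f x\<bar> \<partial>M)"
    using integral_norm_bound[of M f] by simp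
  ultimately show ?thesis by linarith
qed

lemma (in finite_measure) integral_power2_le_of_abs_le:
  fixes f g :: "'a \<Rightarrow> real"
  assumes "f \<in> borel_measurable M" "g \<in> borel_measurable M"
    and le: "\<And>x. x \<in> space M \<Longrightarrow> \<bar>f x\<bar> \<le> g x" and bounded: "\<And>x. x \<in> space M \<Longrightarrow> g x \<le> c"
  shows "(\<integral>x. (f x)\<^sup>2 \<partial>M) \<le> (\<integral>x. (g x)\<^sup>2 \<partial>M)"
proof (rule integral_mono)
  show square_le: "(f x)\<^sup>2 \<le> (g x)\<^sup>2" if "x \<in> space M" for x
    using le[OF that] by (metis abs_ge_zero power2_abs power_mono)
  have g_square: "(g x)\<^sup>2 \<le> c\<^sup>2" if "x \<in> space M" for x
    using le[OF that] bounded[OF that] by (intro power_mono) auto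
  show "integrable M (\<lambda>x. (g x)\<^sup>2)"
    using assms(2) g_square by (intro integrable_const_bound[where B="c\<^sup>2"] AE_I2) auto
  show "integrable M (\<lambda>x. (f x)\<^sup>2)"
    using assms(1) square_le g_square
    by (intro integrable_const_bound[where B="c\<^sup>2"] AE_I2) (auto intro: order.trans)
qed

lemma (in prob_space) real_cond_exp_abs_le_const:
  fixes Y :: "'a \<Rightarrow> real"
  assumes "subalgebra M F" and "Y \<in> borel_measurable M" and "AE x in M. \<bar>Y x\<bar> \<le> c"
  shows "AE x in M. \<bar>real_cond_exp M F Y x\<bar> \<le> c"
proof -
  interpret finite_measure_subalgebra M F by unfold_locales (rule assms(1))
  have Y: "integrable M Y" using assms(2,3) by (intro integrable_const_bound[where B=c]) auto
  have "AE x in M. real_cond_exp M F Y x \<le> c" using assms(3) by (intro real_cond_exp_le_c[OF Y]) auto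
  moreover have "AE x in M. real_cond_exp M F Y x \<ge> -c" using assms(3) by (intro real_cond_exp_ge_c[OF Y]) auto
  ultimately show ?thesis by eventually_elim auto
qed

lemma (in prob_space) real_cond_exp_pythagoras:
  fixes Y :: "'a \<Rightarrow> real"
  assumes F: "subalgebra M F" and Y[measurable]: "Y \<in> borel_measurable M"
    and bounded: "AE x in M. \<bar>Y x\<bar> \<le> c"
  shows "(\<integral>x. (Y x - real_cond_exp M F Y x)\<^sup>2 \<partial>M)
           = (\<integral>x. (Y x)\<^sup>2 \<partial>M) - (\<integral>x. (real_cond_exp M F Y x)\<^sup>2 \<partial>M)"
proof -
  interpret finite_measure_subalgebra M F by unfold_locales (rule F)
  let ?C = "real_cond_exp M F Y"
  have C_bounded: "AE x in M. \<bar>?C x\<bar> \<le> c"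
    by (rule real_cond_exp_abs_le_const[OF F Y bounded])
  have product_integrable: "integrable M (\<lambda>x. f x * g x)"
    if "AE x in M. \<bar>f x\<bar> \<le> c" "AE x in M. \<bar>g x\<bar> \<le> c"
      "f \<in> borel_measurable M" "g \<in> borel_measurable M" for f g
  proof (rule integrable_const_bound[where B="c * c"])
    show "AE x in M. norm (f x * g x) \<le> c * c"
      using that(1,2) by eventually_elim (auto simp: abs_mult intro: mult_mono')
  qed (use that in simp)
  have CY: "integrable M (\<lambda>x. ?C x * Y x)" and CC: "integrable M (\<lambda>x. ?C x * ?C x)"
    and YY: "integrable M (\<lambda>x. Y x * Y x)"
    using product_integrable C_bounded bounded by auto
  have orthogonal: "(\<integral>x. ?C x * ?C x \<partial>M) = (\<integral>x. ?C x * Y x \<partial>M)"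
    by (rule real_cond_exp_intg(2)[OF CY]) auto
  have "(\<integral>x. (Y x - ?C x)\<^sup>2 \<partial>M) = (\<integral>x. Y x * Y x - 2 * (?C x * Y x) + ?C x * ?C x \<partial>M)"
    by (simp add: power2_eq_square algebra_simps)
  also have "\<dots> = (\<integral>x. Y x * Y x \<partial>M) - 2 * (\<integral>x. ?C x * Y x \<partial>M) + (\<integral>x. ?C x * ?C x \<partial>M)"
    using CY CC YY by simp
  also have "\<dots> = (\<integral>x. (Y x)\<^sup>2 \<partial>M) - (\<integral>x. (?C x)\<^sup>2 \<partial>M)"
    using orthogonal by (simp add: power2_eq_square)
  finally show ?thesis .
qed

text \<open>Where \<open>Y'\<close> gains no information from \<open>G\<close> to \<open>F\<close>, the increment of the Doob martingale
  of \<open>Y\<close> is that of \<open>Y - Y'\<close>, and conditional expectation contracts the \<open>L\<^sup>2\<close> norm.\<close>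

lemma (in prob_space) variance_cond_exp_increment_le:
  fixes Y Y' :: "'a \<Rightarrow> real"
  assumes F: "subalgebra M F" and G: "subalgebra M G" and GF: "subalgebra F G"
    and Y[measurable]: "Y \<in> borel_measurable M" "AE x in M. \<bar>Y x\<bar> \<le> c"
    and Y'[measurable]: "Y' \<in> borel_measurable M" "AE x in M. \<bar>Y' x\<bar> \<le> c"
    and no_gain: "AE x in M. real_cond_exp M F Y' x = real_cond_exp M G Y' x"
  shows "variance (\<lambda>x. real_cond_exp M F Y x - real_cond_exp M G Y x)
           \<le> expectation (\<lambda>x. (Y x - Y' x)\<^sup>2)"
proof -
  interpret F: finite_measure_subalgebra M F by unfold_locales (rule F)
  interpret G: finite_measure_subalgebra M G by unfold_locales (rule G)
  define Z where "Z x = Y x - Y' x" for x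
  have Z[measurable]: "Z \<in> borel_measurable M" unfolding Z_def by measurable
  have Z_bounded: "AE x in M. \<bar>Z x\<bar> \<le> 2 * c"
    using Y(2) Y'(2) by eventually_elim (simp add: Z_def)
  have iY: "integrable M Y" and iY': "integrable M Y'" and iZ: "integrable M Z"
    using Y Y' Z Z_bounded by (auto intro!: integrable_const_bound)
  let ?A = "real_cond_exp M F Z"
  let ?X = "\<lambda>x. real_cond_exp M F Y x - real_cond_exp M G Y x"
  have increment: "AE x in M. ?X x = ?A x - real_cond_exp M G ?A x"
  proof -
    have "AE x in M. real_cond_exp M F Z x = real_cond_exp M F Y x - real_cond_exp M F Y' x"
      unfolding Z_def by (rule F.real_cond_exp_diff[OF iY iY'])
    moreover have "AE x in M. real_cond_exp M G Z x = real_cond_exp M G Y x - real_cond_exp M G Y' x"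
      unfolding Z_def by (rule G.real_cond_exp_diff[OF iY iY'])
    moreover have "AE x in M. real_cond_exp M G ?A x = real_cond_exp M G Z x"
      by (rule G.real_cond_exp_nested_subalg[OF F GF iZ])
    ultimately show ?thesis using no_gain by eventually_elim simp
  qed
  have "expectation ?X = 0"
    using F.real_cond_exp_int[OF iY] G.real_cond_exp_int[OF iY] by simp
  then have "variance ?X = (\<integral>x. (?X x)\<^sup>2 \<partial>M)" by simp
  also have "\<dots> = (\<integral>x. (?A x - real_cond_exp M G ?A x)\<^sup>2 \<partial>M)"
    using increment by (intro integral_cong_AE) (auto elim!: eventually_mono)
  also have "\<dots> \<le> (\<integral>x. (?A x)\<^sup>2 \<partial>M)"
    using real_cond_exp_pythagoras[OF G _ real_cond_exp_abs_le_const[OF F Z Z_bounded]] by simp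
  also have "\<dots> \<le> (\<integral>x. (Z x)\<^sup>2 \<partial>M)"
    using real_cond_exp_pythagoras[OF F Z Z_bounded] integral_nonneg_AE[of "\<lambda>x. (Z x - ?A x)\<^sup>2" M]
    by simp
  finally show ?thesis unfolding Z_def .
qed

section \<open>Conditioning on coordinates of a product space\<close>

lemma open_Int_space_PiM_borel:
  fixes X :: "('i::countable \<Rightarrow> 'a::second_countable_topology) set"
  assumes "open X"
  shows "X \<inter> space (PiM I (\<lambda>_. borel)) \<in> sets (PiM I (\<lambda>_. borel))"
proof -
  have "(\<lambda>\<eta>. \<eta> i) \<in> borel_measurable (PiM I (\<lambda>_. borel :: 'a measure))" for i
  proof (cases "i \<in> I")
    case False
    then have "(\<lambda>\<eta>. \<eta> i) \<in> space (PiM I (\<lambda>_. borel :: 'a measure)) \<rightarrow> {undefined}"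
      by (auto simp: space_PiM PiE_def extensional_def)
    then show ?thesis
      by (intro measurable_cong[THEN iffD2, OF _ measurable_const[of undefined]]) auto
  qed simp
  then have "(\<lambda>\<eta>. \<eta>) \<in> measurable (PiM I (\<lambda>_. borel)) (borel :: ('i \<Rightarrow> 'a) measure)"
    by (rule measurable_coordinatewise_then_product)
  from measurable_sets[OF this, of X] assms show ?thesis by (simp add: Int_commute)
qed

lemma subalgebra_restrict_PiM:
  assumes "K \<subseteq> I"
  shows "subalgebra (PiM I M) (vimage_algebra (space (PiM I M)) (\<lambda>\<eta>. restrict \<eta> K) (PiM K M))"
  unfolding subalgebra_def
proof
  have into: "(\<lambda>\<eta>. restrict \<eta> K) \<in> space (PiM I M) \<rightarrow> space (PiM K M)"
    using assms by (auto simp: space_PiM)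
  show "space (vimage_algebra (space (PiM I M)) (\<lambda>\<eta>. restrict \<eta> K) (PiM K M)) = space (PiM I M)"
    by simp
  show "sets (vimage_algebra (space (PiM I M)) (\<lambda>\<eta>. restrict \<eta> K) (PiM K M)) \<subseteq> sets (PiM I M)"
  proof
    fix A assume "A \<in> sets (vimage_algebra (space (PiM I M)) (\<lambda>\<eta>. restrict \<eta> K) (PiM K M))"
    then obtain B where "B \<in> sets (PiM K M)" "A = (\<lambda>\<eta>. restrict \<eta> K) -` B \<inter> space (PiM I M)"
      unfolding sets_vimage_algebra2[OF into] by blast
    then show "A \<in> sets (PiM I M)"
      using measurable_sets[OF measurable_restrict_subset[OF assms]] by simp
  qed
qed

lemma subalgebra_restrict_PiM_mono:
  assumes "K \<subseteq> K'" "K' \<subseteq> I"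
  shows "subalgebra (vimage_algebra (space (PiM I M)) (\<lambda>\<eta>. restrict \<eta> K') (PiM K' M))
           (vimage_algebra (space (PiM I M)) (\<lambda>\<eta>. restrict \<eta> K) (PiM K M))"
  unfolding subalgebra_def
proof
  let ?X = "space (PiM I M)"
  have into: "(\<lambda>\<eta>. restrict \<eta> K) \<in> ?X \<rightarrow> space (PiM K M)" "(\<lambda>\<eta>. restrict \<eta> K') \<in> ?X \<rightarrow> space (PiM K' M)"
    using assms by (auto simp: space_PiM subset_iff)
  show "space (vimage_algebra ?X (\<lambda>\<eta>. restrict \<eta> K) (PiM K M))
      = space (vimage_algebra ?X (\<lambda>\<eta>. restrict \<eta> K') (PiM K' M))" by simp
  show "sets (vimage_algebra ?X (\<lambda>\<eta>. restrict \<eta> K) (PiM K M))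
      \<subseteq> sets (vimage_algebra ?X (\<lambda>\<eta>. restrict \<eta> K') (PiM K' M))"
  proof
    fix A assume "A \<in> sets (vimage_algebra ?X (\<lambda>\<eta>. restrict \<eta> K) (PiM K M))"
    then obtain B where B: "B \<in> sets (PiM K M)" "A = (\<lambda>\<eta>. restrict \<eta> K) -` B \<inter> ?X"
      unfolding sets_vimage_algebra2[OF into(1)] by blast
    define B' where "B' = (\<lambda>f. restrict f K) -` B \<inter> space (PiM K' M)"
    have "B' \<in> sets (PiM K' M)"
      unfolding B'_def by (rule measurable_sets[OF measurable_restrict_subset[OF assms(1)] B(1)])
    moreover have "A = (\<lambda>\<eta>. restrict \<eta> K') -` B' \<inter> ?X"
      unfolding B(2) B'_def using assms by (auto simp: space_PiM Int_absorb1 subset_iff PiE_iff)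
    ultimately show "A \<in> sets (vimage_algebra ?X (\<lambda>\<eta>. restrict \<eta> K') (PiM K' M))"
      unfolding sets_vimage_algebra2[OF into(2)] by blast
  qed
qed

lemma (in product_prob_space) integral_restrict_preimage_PiM:
  fixes f :: "('i \<Rightarrow> 'a) \<Rightarrow> real"
  assumes KL: "K \<inter> L = {}" "finite K" "finite L"
    and f: "integrable (PiM (K \<union> L) M) f" and B: "B \<in> sets (PiM K M)"
  shows "(\<integral>z\<in>(\<lambda>\<eta>. restrict \<eta> K) -` B \<inter> space (PiM (K \<union> L) M). f z \<partial>PiM (K \<union> L) M)
           = (\<integral>x. indicator B x * (\<integral>\<xi>. f (merge K L (x, \<xi>)) \<partial>PiM L M) \<partial>PiM K M)"
proof -
  let ?A = "(\<lambda>\<eta>. restrict \<eta> K) -` B \<inter> space (PiM (K \<union> L) M)"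
  have A: "?A \<in> sets (PiM (K \<union> L) M)"
    using measurable_sets[OF measurable_restrict_subset B] by auto
  have "integrable (PiM (K \<union> L) M) (\<lambda>z. indicator ?A z * f z)"
    using integrable_mult_indicator[OF A f] by simp
  then have "(\<integral>z. indicator ?A z * f z \<partial>PiM (K \<union> L) M)
      = (\<integral>x. (\<integral>\<xi>. indicator ?A (merge K L (x, \<xi>)) * f (merge K L (x, \<xi>)) \<partial>PiM L M) \<partial>PiM K M)"
    using KL by (intro product_integral_fold)
  also have "\<dots> = (\<integral>x. indicator B x * (\<integral>\<xi>. f (merge K L (x, \<xi>)) \<partial>PiM L M) \<partial>PiM K M)"
  proof (intro Bochner_Integration.integral_cong refl)
    fix x assume x: "x \<in> space (PiM K M)"
    have "indicator ?A (merge K L (x, \<xi>)) = (indicator B x :: real)" if "\<xi> \<in> space (PiM L M)" for \<xi>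
    proof -
      have "merge K L (x, \<xi>) \<in> space (PiM (K \<union> L) M)"
        using x that by (auto simp: space_PiM merge_def PiE_def extensional_def)
      moreover have "restrict (merge K L (x, \<xi>)) K = x"
        using KL(1) x by (simp add: space_PiM)
      ultimately show ?thesis by (simp add: indicator_def)
    qed
    then show "(\<integral>\<xi>. indicator ?A (merge K L (x, \<xi>)) * f (merge K L (x, \<xi>)) \<partial>PiM L M)
        = indicator B x * (\<integral>\<xi>. f (merge K L (x, \<xi>)) \<partial>PiM L M)"
      by (simp cong: Bochner_Integration.integral_cong)
  qed
  finally show ?thesis by (simp add: set_lebesgue_integral_def)
qed

lemma (in product_prob_space) borel_measurable_integral_merge:
  fixes g :: "('i \<Rightarrow> 'a) \<Rightarrow> real"
  assumes "g \<in> borel_measurable (PiM (K \<union> L) M)"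
  shows "(\<lambda>x. \<integral>\<xi>. g (merge K L (x, \<xi>)) \<partial>PiM L M) \<in> borel_measurable (PiM K M)"
proof -
  interpret L: prob_space "PiM L M" by (rule prob_space_PiM) (rule prob_space)
  show ?thesis
    using measurable_comp[OF measurable_merge assms]
    by (intro L.borel_measurable_lebesgue_integral) (simp add: comp_def case_prod_beta')
qed

lemma (in product_prob_space) abs_integral_merge_le:
  fixes g :: "('i \<Rightarrow> 'a) \<Rightarrow> real"
  assumes g[measurable]: "g \<in> borel_measurable (PiM (K \<union> L) M)"
    and bounded: "\<And>z. z \<in> space (PiM (K \<union> L) M) \<Longrightarrow> \<bar>g z\<bar> \<le> c"
    and x: "x \<in> space (PiM K M)"
  shows "\<bar>\<integral>\<xi>. g (merge K L (x, \<xi>)) \<partial>PiM L M\<bar> \<le> c"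
proof -
  interpret L: prob_space "PiM L M" by (rule prob_space_PiM) (rule prob_space)
  show ?thesis
  proof (rule L.abs_integral_le_const)
    show "(\<lambda>\<xi>. g (merge K L (x, \<xi>))) \<in> borel_measurable (PiM L M)"
      using x by measurable
    show "AE \<xi> in PiM L M. \<bar>g (merge K L (x, \<xi>))\<bar> \<le> c"
      using x by (intro AE_I2 bounded) (auto simp: space_PiM merge_def PiE_def extensional_def)
  qed
qed

lemma (in product_prob_space) real_cond_exp_PiM_restrict:
  fixes g :: "('i \<Rightarrow> 'a) \<Rightarrow> real"
  assumes KL: "K \<inter> L = {}" "finite K" "finite L"
    and g[measurable]: "g \<in> borel_measurable (PiM (K \<union> L) M)"
    and bounded: "\<And>z. z \<in> space (PiM (K \<union> L) M) \<Longrightarrow> \<bar>g z\<bar> \<le> c"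
  shows "AE \<eta> in PiM (K \<union> L) M.
           real_cond_exp (PiM (K \<union> L) M)
             (vimage_algebra (space (PiM (K \<union> L) M)) (\<lambda>\<eta>. restrict \<eta> K) (PiM K M)) g \<eta>
           = (\<integral>\<xi>. g (merge K L (\<eta>, \<xi>)) \<partial>PiM L M)"
proof -
  define N where "N = PiM (K \<union> L) M"
  define F where "F = vimage_algebra (space N) (\<lambda>\<eta>. restrict \<eta> K) (PiM K M)"
  define h' where "h' x = (\<integral>\<xi>. g (merge K L (x, \<xi>)) \<partial>PiM L M)" for x
  define h where "h \<eta> = h' (restrict \<eta> K)" for \<eta>
  interpret N: prob_space N unfolding N_def by (rule prob_space_PiM) (rule prob_space)
  interpret L: prob_space "PiM L M" by (rule prob_space_PiM) (rule prob_space)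
  have restrict_space: "(\<lambda>\<eta>. restrict \<eta> K) \<in> space N \<rightarrow> space (PiM K M)"
    unfolding N_def by (auto simp: space_PiM)
  have F: "subalgebra N F"
    unfolding F_def N_def by (rule subalgebra_restrict_PiM) simp
  interpret F: finite_measure_subalgebra N F by unfold_locales (rule F)
  have hF: "h \<in> borel_measurable F"
    unfolding h_def h'_def F_def
    using measurable_vimage_algebra1[OF restrict_space] borel_measurable_integral_merge[OF g]
    by measurable
  have g_integrable: "integrable N g"
    using bounded g unfolding N_def[symmetric] by (intro N.integrable_const_bound[where B=c] AE_I2) auto
  have "\<bar>h \<eta>\<bar> \<le> c" if "\<eta> \<in> space N" for \<eta>
    unfolding h_def h'_def using restrict_space that by (intro abs_integral_merge_le[OF g bounded]) auto
  then have h_integrable: "integrable N h"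
    using measurable_from_subalg[OF F hF] by (intro N.integrable_const_bound[where B=c] AE_I2) auto
  have "AE \<eta> in N. real_cond_exp N F g \<eta> = h \<eta>"
  proof (rule F.real_cond_exp_charact[OF _ g_integrable h_integrable hF])
    fix A assume "A \<in> sets F"
    then obtain B where B: "B \<in> sets (PiM K M)" "A = (\<lambda>\<eta>. restrict \<eta> K) -` B \<inter> space N"
      unfolding F_def sets_vimage_algebra2[OF restrict_space] by blast
    have "(\<integral>\<xi>. h (merge K L (x, \<xi>)) \<partial>PiM L M) = h' x" if "x \<in> space (PiM K M)" for x
      using that KL(1) L.prob_space by (simp add: h_def space_PiM)
    then have "(\<integral>x\<in>A. h x \<partial>N) = (\<integral>x. indicator B x * h' x \<partial>PiM K M)"
      unfolding B(2) N_def using integral_restrict_preimage_PiM[OF KL h_integrable[unfolded N_def] B(1)]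
      by (simp cong: Bochner_Integration.integral_cong)
    moreover have "(\<integral>x\<in>A. g x \<partial>N) = (\<integral>x. indicator B x * h' x \<partial>PiM K M)"
      unfolding B(2) N_def h'_def by (rule integral_restrict_preimage_PiM[OF KL g_integrable[unfolded N_def] B(1)])
    ultimately show "(\<integral>x\<in>A. g x \<partial>N) = (\<integral>x\<in>A. h x \<partial>N)" by simp
  qed
  then show ?thesis unfolding N_def F_def h_def h'_def by simp
qed

lemma (in product_prob_space) integral_merge_irrelevant_coordinate:
  fixes g :: "('i \<Rightarrow> 'a) \<Rightarrow> real"
  assumes KL: "K \<inter> insert m L = {}" "finite L" "m \<notin> L"
    and g[measurable]: "g \<in> borel_measurable (PiM (K \<union> insert m L) M)"
    and bounded: "\<And>z. z \<in> space (PiM (K \<union> insert m L) M) \<Longrightarrow> \<bar>g z\<bar> \<le> c"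
    and irrelevant: "\<And>z y. g (z(m := y)) = g z"
    and \<eta>: "\<eta> \<in> space (PiM (K \<union> insert m L) M)"
  shows "(\<integral>\<zeta>. g (merge K (insert m L) (\<eta>, \<zeta>)) \<partial>PiM (insert m L) M)
           = (\<integral>\<xi>. g (merge (insert m K) L (\<eta>, \<xi>)) \<partial>PiM L M)"
proof -
  interpret Q: prob_space "PiM (insert m L) M" by (rule prob_space_PiM) (rule prob_space)
  have "(\<integral>\<zeta>. g (merge K (insert m L) (\<eta>, \<zeta>)) \<partial>PiM (insert m L) M)
      = (\<integral>\<xi>. (\<integral>y. g (merge K (insert m L) (\<eta>, \<xi>(m := y))) \<partial>M m) \<partial>PiM L M)"
  proof (rule product_integral_insert[OF KL(2,3)])
    have "restrict \<eta> K \<in> space (PiM K M)" using \<eta> by (auto simp: space_PiM)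
    then have "(\<lambda>\<zeta>. g (merge K (insert m L) (restrict \<eta> K, \<zeta>))) \<in> borel_measurable (PiM (insert m L) M)"
      by measurable
    moreover have "merge K (insert m L) (\<eta>, \<zeta>) \<in> space (PiM (K \<union> insert m L) M)"
      if "\<zeta> \<in> space (PiM (insert m L) M)" for \<zeta>
      using \<eta> that by (auto simp: space_PiM merge_def PiE_def extensional_def)
    ultimately show "integrable (PiM (insert m L) M) (\<lambda>\<zeta>. g (merge K (insert m L) (\<eta>, \<zeta>)))"
      using bounded by (intro Q.integrable_const_bound[where B=c] AE_I2) auto
  qed
  also have "\<dots> = (\<integral>\<xi>. g (merge (insert m K) L (\<eta>, \<xi>)) \<partial>PiM L M)"
  proof -
    have "merge K (insert m L) (\<eta>, \<xi>(m := y)) = (merge (insert m K) L (\<eta>, \<xi>))(m := y)" for \<xi> y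
      using KL(1,3) by (auto simp: merge_def fun_eq_iff)
    then show ?thesis by (simp add: irrelevant M.prob_space)
  qed
  finally show ?thesis .
qed

lemma (in product_prob_space) real_cond_exp_PiM_restrict_irrelevant_coordinate:
  fixes g :: "('i \<Rightarrow> 'a) \<Rightarrow> real"
  assumes J: "finite J" "K \<subseteq> J" "m \<in> J - K"
    and g[measurable]: "g \<in> borel_measurable (PiM J M)"
    and bounded: "\<And>z. z \<in> space (PiM J M) \<Longrightarrow> \<bar>g z\<bar> \<le> c"
    and irrelevant: "\<And>z y. g (z(m := y)) = g z"
  shows "AE \<eta> in PiM J M.
           real_cond_exp (PiM J M)
             (vimage_algebra (space (PiM J M)) (\<lambda>\<eta>. restrict \<eta> (insert m K)) (PiM (insert m K) M)) g \<eta>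
           = real_cond_exp (PiM J M)
             (vimage_algebra (space (PiM J M)) (\<lambda>\<eta>. restrict \<eta> K) (PiM K M)) g \<eta>"
proof -
  define L where "L = J - insert m K"
  have J_split: "J = insert m K \<union> L" "J = K \<union> insert m L"
    and disjoint: "insert m K \<inter> L = {}" "K \<inter> insert m L = {}"
    and finite: "finite K" "finite L" "m \<notin> L"
    using J unfolding L_def by (auto dest: finite_subset)
  have "AE \<eta> in PiM J M.
        real_cond_exp (PiM J M)
          (vimage_algebra (space (PiM J M)) (\<lambda>\<eta>. restrict \<eta> (insert m K)) (PiM (insert m K) M)) g \<eta>
        = (\<integral>\<xi>. g (merge (insert m K) L (\<eta>, \<xi>)) \<partial>PiM L M)"
    using real_cond_exp_PiM_restrict[OF disjoint(1) _ finite(2), of g c] g bounded finite(1)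
    unfolding J_split(1)[symmetric] by simp
  moreover have "AE \<eta> in PiM J M.
        real_cond_exp (PiM J M) (vimage_algebra (space (PiM J M)) (\<lambda>\<eta>. restrict \<eta> K) (PiM K M)) g \<eta>
        = (\<integral>\<zeta>. g (merge K (insert m L) (\<eta>, \<zeta>)) \<partial>PiM (insert m L) M)"
    using real_cond_exp_PiM_restrict[OF disjoint(2) finite(1), of g c] g bounded finite(2)
    unfolding J_split(2)[symmetric] by simp
  moreover have "AE \<eta> in PiM J M. (\<integral>\<zeta>. g (merge K (insert m L) (\<eta>, \<zeta>)) \<partial>PiM (insert m L) M)
      = (\<integral>\<xi>. g (merge (insert m K) L (\<eta>, \<xi>)) \<partial>PiM L M)"
    using integral_merge_irrelevant_coordinate[OF disjoint(2) finite(2,3), of g c] g bounded irrelevant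
    unfolding J_split(2)[symmetric] by (intro AE_I2) auto
  ultimately show ?thesis by eventually_elim simp
qed

section \<open>Voronoi cells\<close>

definition voronoi_cell_on :: "'a::metric_space set \<Rightarrow> 'i set \<Rightarrow> ('i \<Rightarrow> 'a) \<Rightarrow> 'i \<Rightarrow> 'a set" where
  "voronoi_cell_on R S \<eta> u = {x \<in> R. \<forall>v\<in>S. dist (\<eta> u) x \<le> dist (\<eta> v) x}"

lemma voronoi_cell_on_antimono:
  "S \<subseteq> T \<Longrightarrow> voronoi_cell_on R T \<eta> u \<subseteq> voronoi_cell_on R S \<eta> u"
  unfolding voronoi_cell_on_def by auto

lemma voronoi_cell_on_remove_site:
  "voronoi_cell_on R (S - {m}) \<eta> u \<subseteq> voronoi_cell_on R S \<eta> u \<union> voronoi_cell_on R S \<eta> m"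
proof
  fix x assume "x \<in> voronoi_cell_on R (S - {m}) \<eta> u"
  then have x: "x \<in> R" "\<And>v. v \<in> S \<Longrightarrow> v \<noteq> m \<Longrightarrow> dist (\<eta> u) x \<le> dist (\<eta> v) x"
    unfolding voronoi_cell_on_def by auto
  consider "dist (\<eta> u) x \<le> dist (\<eta> m) x" | "dist (\<eta> m) x < dist (\<eta> u) x" by linarith
  then show "x \<in> voronoi_cell_on R S \<eta> u \<union> voronoi_cell_on R S \<eta> m"
  proof cases
    case 1
    then have "dist (\<eta> u) x \<le> dist (\<eta> v) x" if "v \<in> S" for v
      using x(2)[OF that] by (cases "v = m") auto
    then show ?thesis using x(1) unfolding voronoi_cell_on_def by blast
  next
    case 2
    then have "dist (\<eta> m) x \<le> dist (\<eta> v) x" if "v \<in> S" for v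
      using x(2)[OF that] by (cases "v = m") auto
    then show ?thesis using x(1) unfolding voronoi_cell_on_def by blast
  qed
qed

lemma voronoi_cell_on_cong:
  "(\<And>i. i \<in> S \<Longrightarrow> \<eta> i = \<eta>' i) \<Longrightarrow> u \<in> S \<Longrightarrow> voronoi_cell_on R S \<eta> u = voronoi_cell_on R S \<eta>' u"
  unfolding voronoi_cell_on_def by auto

lemma infdist_finite_attained:
  assumes "finite A" "A \<noteq> {}"
  obtains a where "a \<in> A" "infdist x A = dist x a"
proof -
  have "infdist x A = Min (dist x ` A)"
    using assms by (simp add: infdist_notempty cInf_eq_Min)
  moreover have "Min (dist x ` A) \<in> dist x ` A"
    using assms by (intro Min_in) auto
  ultimately show ?thesis using that by auto
qed

lemma voronoi_cell_on_margin:
  assumes "compact P" "P \<subseteq> R" "P \<inter> voronoi_cell_on R S \<eta> u = {}"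
  obtains e where "e > 0" "\<And>x. x \<in> P \<Longrightarrow> infdist x (\<eta> ` S) + e \<le> dist (\<eta> u) x"
proof (cases "P = {}")
  case False
  let ?gap = "\<lambda>x. dist (\<eta> u) x - infdist x (\<eta> ` S)"
  have gap_pos: "?gap x > 0" if x: "x \<in> P" for x
  proof -
    have "x \<notin> voronoi_cell_on R S \<eta> u" "x \<in> R" using x assms(2,3) by auto
    then obtain v where v: "v \<in> S" "dist (\<eta> v) x < dist (\<eta> u) x"
      unfolding voronoi_cell_on_def by (auto simp: not_le)
    have "infdist x (\<eta> ` S) \<le> dist x (\<eta> v)" using v(1) by (intro infdist_le) auto
    then show ?thesis using v(2) by (simp add: dist_commute)
  qed
  have "continuous_on P ?gap" by (intro continuous_intros)
  then obtain x0 where "x0 \<in> P" "\<And>x. x \<in> P \<Longrightarrow> ?gap x0 \<le> ?gap x"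
    using continuous_attains_inf[OF assms(1) False, of ?gap] by blast
  then show ?thesis using that[of "?gap x0"] gap_pos by force
qed (use that[of 1] in simp)

lemma voronoi_cell_on_perturb:
  assumes margin: "\<And>x. x \<in> P \<Longrightarrow> infdist x (\<eta>0 ` S) + e \<le> dist (\<eta>0 u) x"
    and "finite S" "u \<in> S" and close: "\<And>i. i \<in> S \<Longrightarrow> dist (\<eta> i) (\<eta>0 i) < e / 2"
  shows "P \<inter> voronoi_cell_on R S \<eta> u = {}"
proof (intro equals0I)
  fix x assume "x \<in> P \<inter> voronoi_cell_on R S \<eta> u"
  then have x: "x \<in> P" "\<And>v. v \<in> S \<Longrightarrow> dist (\<eta> u) x \<le> dist (\<eta> v) x"
    unfolding voronoi_cell_on_def by auto
  obtain v where v: "v \<in> S" "infdist x (\<eta>0 ` S) = dist x (\<eta>0 v)"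
    using infdist_finite_attained[of "\<eta>0 ` S" x] assms(2,3) by blast
  have "dist (\<eta> v) x \<le> dist (\<eta>0 v) x + dist (\<eta> v) (\<eta>0 v)"
    and "dist (\<eta>0 u) x \<le> dist (\<eta> u) x + dist (\<eta> u) (\<eta>0 u)"
    by (metis dist_commute dist_triangle)+
  then have "dist (\<eta> v) x < dist (\<eta> u) x"
    using margin[OF x(1)] v close[OF v(1)] close[OF assms(3)] by (simp add: dist_commute)
  with x(2)[OF v(1)] show False by simp
qed

lemma open_avoiding_voronoi_cell_on:
  fixes P :: "'a::metric_space set"
  assumes "compact P" "P \<subseteq> R" "finite S" "u \<in> S"
  shows "open {\<eta> :: 'i \<Rightarrow> 'a. P \<inter> voronoi_cell_on R S \<eta> u = {}}"
proof (subst open_subopen, intro ballI)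
  fix \<eta>0 assume "\<eta>0 \<in> {\<eta>. P \<inter> voronoi_cell_on R S \<eta> u = {}}"
  then have avoid: "P \<inter> voronoi_cell_on R S \<eta>0 u = {}" by simp
  obtain e where e: "e > 0" "\<And>x. x \<in> P \<Longrightarrow> infdist x (\<eta>0 ` S) + e \<le> dist (\<eta>0 u) x"
    using voronoi_cell_on_margin[OF assms(1,2) avoid] by blast
  define T where "T = (\<Inter>i\<in>S. (\<lambda>\<eta>. \<eta> i) -` ball (\<eta>0 i) (e / 2))"
  have "open ((\<lambda>\<eta>. \<eta> i) -` ball (\<eta>0 i) (e / 2))" for i
    by (rule open_vimage[OF open_ball continuous_on_product_coordinates])
  then have "open T"
    unfolding T_def using assms(3) by (intro open_INT) auto
  moreover have "\<eta>0 \<in> T" using e(1) by (simp add: T_def)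
  moreover have "T \<subseteq> {\<eta>. P \<inter> voronoi_cell_on R S \<eta> u = {}}"
  proof
    fix \<eta> assume "\<eta> \<in> T"
    then have "dist (\<eta> i) (\<eta>0 i) < e / 2" if "i \<in> S" for i
      using that by (simp add: T_def dist_commute)
    then show "\<eta> \<in> {\<eta>. P \<inter> voronoi_cell_on R S \<eta> u = {}}"
      using voronoi_cell_on_perturb[OF e(2) assms(3,4)] by simp
  qed
  ultimately show "\<exists>T. open T \<and> \<eta>0 \<in> T \<and> T \<subseteq> {\<eta>. P \<inter> voronoi_cell_on R S \<eta> u = {}}"
    by (intro exI conjI)
qed

section \<open>Red crossings\<close>

definition crossing_path :: "real \<Rightarrow> real \<Rightarrow> real \<Rightarrow> real \<Rightarrow> (real \<Rightarrow> real \<times> real) \<Rightarrow> bool" where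
  "crossing_path a1 a2 b1 b2 \<gamma> \<longleftrightarrow>
     path \<gamma> \<and> path_image \<gamma> \<subseteq> rect a1 a2 b1 b2 \<and> fst (pathstart \<gamma>) = a1 \<and> fst (pathfinish \<gamma>) = b1"

definition red_crossing_on ::
    "real \<Rightarrow> real \<Rightarrow> real \<Rightarrow> real \<Rightarrow> nat set \<Rightarrow> (nat \<Rightarrow> real \<times> real) \<Rightarrow> (nat \<Rightarrow> bool) \<Rightarrow> bool" where
  "red_crossing_on a1 a2 b1 b2 S \<eta> \<omega> \<longleftrightarrow>
     (\<exists>\<gamma>. crossing_path a1 a2 b1 b2 \<gamma> \<and>
          (\<forall>u\<in>S. path_image \<gamma> \<inter> voronoi_cell_on (rect a1 a2 b1 b2) S \<eta> u \<noteq> {} \<longrightarrow> \<omega> u))"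

lemma red_crossing_eq_red_crossing_on:
  "red_crossing a1 a2 b1 b2 n \<eta> \<omega> = red_crossing_on a1 a2 b1 b2 {1..n} \<eta> \<omega>"
  unfolding red_crossing_def red_crossing_on_def crossing_path_def vcell_def voronoi_cell_on_def
  by simp

lemma red_crossing_on_cong_colouring:
  "(\<And>u. u \<in> S \<Longrightarrow> \<omega> u = \<omega>' u) \<Longrightarrow> red_crossing_on a1 a2 b1 b2 S \<eta> \<omega> = red_crossing_on a1 a2 b1 b2 S \<eta> \<omega>'"
  unfolding red_crossing_on_def by auto

lemma red_crossing_on_cong_points:
  assumes "\<And>i. i \<in> S \<Longrightarrow> \<eta> i = \<eta>' i"
  shows "red_crossing_on a1 a2 b1 b2 S \<eta> \<omega> = red_crossing_on a1 a2 b1 b2 S \<eta>' \<omega>"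
proof -
  have "voronoi_cell_on R S \<eta> u = voronoi_cell_on R S \<eta>' u" if "u \<in> S" for R u
    using assms that by (rule voronoi_cell_on_cong)
  then show ?thesis unfolding red_crossing_on_def by simp
qed

lemma red_crossing_on_remove_blue:
  assumes "red_crossing_on a1 a2 b1 b2 S \<eta> \<omega>" "\<not> \<omega> m" "m \<in> S"
  shows "red_crossing_on a1 a2 b1 b2 (S - {m}) \<eta> \<omega>"
proof -
  let ?R = "rect a1 a2 b1 b2"
  obtain \<gamma> where \<gamma>: "crossing_path a1 a2 b1 b2 \<gamma>"
    and red: "\<And>u. u \<in> S \<Longrightarrow> path_image \<gamma> \<inter> voronoi_cell_on ?R S \<eta> u \<noteq> {} \<Longrightarrow> \<omega> u"
    using assms(1) unfolding red_crossing_on_def by blast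
  have "\<omega> u" if "u \<in> S - {m}" "path_image \<gamma> \<inter> voronoi_cell_on ?R (S - {m}) \<eta> u \<noteq> {}" for u
    using that voronoi_cell_on_remove_site[of ?R S m \<eta> u] red[of u] red[of m] assms(2,3) by blast
  then show ?thesis unfolding red_crossing_on_def using \<gamma> by blast
qed

lemma red_crossing_on_insert_red:
  assumes "red_crossing_on a1 a2 b1 b2 (S - {m}) \<eta> \<omega>" "\<omega> m"
  shows "red_crossing_on a1 a2 b1 b2 S \<eta> \<omega>"
proof -
  let ?R = "rect a1 a2 b1 b2"
  obtain \<gamma> where \<gamma>: "crossing_path a1 a2 b1 b2 \<gamma>"
    and red: "\<And>u. u \<in> S - {m} \<Longrightarrow> path_image \<gamma> \<inter> voronoi_cell_on ?R (S - {m}) \<eta> u \<noteq> {} \<Longrightarrow> \<omega> u"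
    using assms(1) unfolding red_crossing_on_def by blast
  have "\<omega> u" if "u \<in> S" "path_image \<gamma> \<inter> voronoi_cell_on ?R S \<eta> u \<noteq> {}" for u
    using that voronoi_cell_on_antimono[of "S - {m}" S ?R \<eta> u] red[of u] assms(2) by blast
  then show ?thesis unfolding red_crossing_on_def using \<gamma> by blast
qed

lemma red_crossing_on_pivotal:
  assumes "m \<in> S"
    and "red_crossing_on a1 a2 b1 b2 S \<eta> \<omega> \<noteq> red_crossing_on a1 a2 b1 b2 (S - {m}) \<eta> \<omega>"
  shows "red_crossing_on a1 a2 b1 b2 S \<eta> \<omega> \<noteq> red_crossing_on a1 a2 b1 b2 S \<eta> (fun_upd \<omega> m (\<not> \<omega> m))"
proof -
  let ?\<omega>' = "fun_upd \<omega> m (\<not> \<omega> m)"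
  have same: "red_crossing_on a1 a2 b1 b2 (S - {m}) \<eta> ?\<omega>' = red_crossing_on a1 a2 b1 b2 (S - {m}) \<eta> \<omega>"
    by (rule red_crossing_on_cong_colouring) simp
  show ?thesis
  proof (cases "\<omega> m")
    case True
    then show ?thesis
      using assms red_crossing_on_insert_red[of a1 a2 b1 b2 S m \<eta> \<omega>]
        red_crossing_on_remove_blue[of a1 a2 b1 b2 S \<eta> ?\<omega>' m] same by auto
  next
    case False
    then show ?thesis
      using assms red_crossing_on_remove_blue[of a1 a2 b1 b2 S \<eta> \<omega> m]
        red_crossing_on_insert_red[of a1 a2 b1 b2 S m \<eta> ?\<omega>'] same by auto
  qed
qed

lemma open_red_crossing_on:
  assumes "finite S"
  shows "open {\<eta>. red_crossing_on a1 a2 b1 b2 S \<eta> \<omega>}"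
proof -
  let ?R = "rect a1 a2 b1 b2"
  have "{\<eta>. red_crossing_on a1 a2 b1 b2 S \<eta> \<omega>}
      = (\<Union>\<gamma>\<in>Collect (crossing_path a1 a2 b1 b2).
           \<Inter>u\<in>{u \<in> S. \<not> \<omega> u}. {\<eta>. path_image \<gamma> \<inter> voronoi_cell_on ?R S \<eta> u = {}})"
    unfolding red_crossing_on_def by blast
  also have "open \<dots>"
  proof (intro open_UN ballI open_INT)
    fix \<gamma> u assume "\<gamma> \<in> Collect (crossing_path a1 a2 b1 b2)" "u \<in> {u \<in> S. \<not> \<omega> u}"
    then show "open {\<eta>. path_image \<gamma> \<inter> voronoi_cell_on ?R S \<eta> u = {}}"
      using assms by (intro open_avoiding_voronoi_cell_on) (auto simp: crossing_path_def compact_path_image)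
  qed (use assms in simp)
  finally show ?thesis .
qed

section \<open>The random Voronoi percolation\<close>

definition crossing_prob :: "real \<Rightarrow> real \<Rightarrow> real \<Rightarrow> real \<Rightarrow> nat \<Rightarrow> nat set \<Rightarrow> (nat \<Rightarrow> real \<times> real) \<Rightarrow> real" where
  "crossing_prob a1 a2 b1 b2 n S \<eta> = measure_pmf.prob (colour_pmf n) {\<omega>. red_crossing_on a1 a2 b1 b2 S \<eta> \<omega>}"

lemma qeta_eq_crossing_prob: "qeta a1 a2 b1 b2 n = crossing_prob a1 a2 b1 b2 n {1..n}"
  unfolding qeta_def crossing_prob_def red_crossing_eq_red_crossing_on ..

lemma crossing_prob_cong_points:
  "(\<And>i. i \<in> S \<Longrightarrow> \<eta> i = \<eta>' i) \<Longrightarrow> crossing_prob a1 a2 b1 b2 n S \<eta> = crossing_prob a1 a2 b1 b2 n S \<eta>'"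
  unfolding crossing_prob_def using red_crossing_on_cong_points[of S \<eta> \<eta>'] by presburger

lemma abs_qeta_diff_le_infl:
  assumes "m \<in> {1..n}"
  shows "\<bar>qeta a1 a2 b1 b2 n \<eta> - crossing_prob a1 a2 b1 b2 n ({1..n} - {m}) \<eta>\<bar>
           \<le> infl a1 a2 b1 b2 n m \<eta>"
proof -
  let ?cross = "\<lambda>S \<omega>. red_crossing_on a1 a2 b1 b2 S \<eta> \<omega>"
  let ?pivotal = "{\<omega>. ?cross {1..n} \<omega> \<noteq> ?cross {1..n} (fun_upd \<omega> m (\<not> \<omega> m))}"
  have "{\<omega>. fR a1 a2 b1 b2 n \<eta> \<omega> \<noteq> fR a1 a2 b1 b2 n \<eta> (fun_upd \<omega> m (\<not> \<omega> m))} = ?pivotal"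
    by (auto simp: fR_def red_crossing_eq_red_crossing_on)
  moreover have "{\<omega>. ?cross {1..n} \<omega>} \<subseteq> {\<omega>. ?cross ({1..n} - {m}) \<omega>} \<union> ?pivotal"
    and "{\<omega>. ?cross ({1..n} - {m}) \<omega>} \<subseteq> {\<omega>. ?cross {1..n} \<omega>} \<union> ?pivotal"
    using red_crossing_on_pivotal[OF assms, of a1 a2 b1 b2 \<eta>] by blast+
  ultimately show ?thesis
    unfolding qeta_eq_crossing_prob crossing_prob_def infl_def
    by (intro measure_pmf.abs_measure_diff_le) auto
qed

lemma sets_eta_space: "sets (eta_space a1 a2 b1 b2 n) = sets (PiM {1..n} (\<lambda>_. borel))"
  unfolding eta_space_def by (rule sets_PiM_cong) (simp_all add: uniform_measure_def)

lemma pred_red_crossing_on: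
  "finite S \<Longrightarrow> Measurable.pred (eta_space a1 a2 b1 b2 n) (\<lambda>\<eta>. red_crossing_on a1 a2 b1 b2 S \<eta> \<omega>)"
proof -
  assume "finite S"
  then have "{\<eta>. red_crossing_on a1 a2 b1 b2 S \<eta> \<omega>} \<inter> space (PiM {1..n} (\<lambda>_. borel))
      \<in> sets (PiM {1..n} (\<lambda>_. borel))"
    by (intro open_Int_space_PiM_borel open_red_crossing_on)
  then show ?thesis
    unfolding pred_def sets_eta_space sets_eq_imp_space_eq[OF sets_eta_space]
    by (simp add: Int_def conj_commute)
qed

lemma measure_colour_pmf:
  "measure_pmf.prob (colour_pmf n) {\<omega>. P \<omega>} = (\<Sum>\<omega>\<in>colourings n. of_bool (P \<omega>)) / card (colourings n)"
proof -
  have "colourings n \<noteq> {}" "finite (colourings n)"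
    unfolding colourings_def by (auto simp: finite_PiE)
  then show ?thesis
    unfolding colour_pmf_def by (simp add: measure_pmf_of_set Int_def)
qed

lemma borel_measurable_crossing_prob:
  "finite S \<Longrightarrow> crossing_prob a1 a2 b1 b2 n S \<in> borel_measurable (eta_space a1 a2 b1 b2 n)"
  unfolding crossing_prob_def[abs_def] measure_colour_pmf using pred_red_crossing_on by measurable

lemma borel_measurable_infl: "infl a1 a2 b1 b2 n m \<in> borel_measurable (eta_space a1 a2 b1 b2 n)"
  unfolding infl_def[abs_def] measure_colour_pmf fR_def red_crossing_eq_red_crossing_on
  using pred_red_crossing_on[of "{1..n}"] by measurable

lemma prob_space_uniform_rect:
  assumes "a1 < b1" "a2 < b2"
  shows "prob_space (uniform_measure lborel (rect a1 a2 b1 b2))"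
proof (rule prob_space_uniform_measure)
  have "emeasure lborel (rect a1 a2 b1 b2) = ennreal ((b1 - a1) * (b2 - a2))"
    using assms unfolding rect_def by (simp add: emeasure_lborel_cbox_eq Basis_prod_def inner_prod_def)
  then show "emeasure lborel (rect a1 a2 b1 b2) \<noteq> 0" "emeasure lborel (rect a1 a2 b1 b2) \<noteq> \<infinity>"
    using assms by auto
qed

lemma filt_eq_vimage_restrict:
  "filt a1 a2 b1 b2 n k = vimage_algebra (space (eta_space a1 a2 b1 b2 n)) (\<lambda>\<eta>. restrict \<eta> {1..k})
     (PiM {1..k} (\<lambda>_. uniform_measure lborel (rect a1 a2 b1 b2)))"
  unfolding filt_def
  by (rule vimage_algebra_cong[OF refl refl sets_PiM_cong[OF refl]]) (simp add: uniform_measure_def)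

lemma subalgebra_filt: "k \<le> n \<Longrightarrow> subalgebra (eta_space a1 a2 b1 b2 n) (filt a1 a2 b1 b2 n k)"
  unfolding filt_eq_vimage_restrict eta_space_def by (rule subalgebra_restrict_PiM) simp

lemma subalgebra_filt_mono:
  "k \<le> l \<Longrightarrow> l \<le> n \<Longrightarrow> subalgebra (filt a1 a2 b1 b2 n l) (filt a1 a2 b1 b2 n k)"
  unfolding filt_eq_vimage_restrict eta_space_def by (rule subalgebra_restrict_PiM_mono) auto

lemma real_cond_exp_filt_crossing_prob_without:
  assumes "a1 < b1" "a2 < b2" "1 \<le> m" "m \<le> n"
  shows "AE \<eta> in eta_space a1 a2 b1 b2 n.
           real_cond_exp (eta_space a1 a2 b1 b2 n) (filt a1 a2 b1 b2 n m)
             (crossing_prob a1 a2 b1 b2 n ({1..n} - {m})) \<eta>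
           = real_cond_exp (eta_space a1 a2 b1 b2 n) (filt a1 a2 b1 b2 n (m - 1))
             (crossing_prob a1 a2 b1 b2 n ({1..n} - {m})) \<eta>"
proof -
  let ?U = "uniform_measure lborel (rect a1 a2 b1 b2)"
  interpret product_prob_space "\<lambda>_. ?U"
    by (intro product_prob_spaceI prob_space_uniform_rect assms(1,2))
  have "insert m {1..m - 1} = {1..m}" using assms(3) by auto
  moreover have "AE \<eta> in PiM {1..n} (\<lambda>_. ?U).
      real_cond_exp (PiM {1..n} (\<lambda>_. ?U))
        (vimage_algebra (space (PiM {1..n} (\<lambda>_. ?U))) (\<lambda>\<eta>. restrict \<eta> (insert m {1..m - 1}))
          (PiM (insert m {1..m - 1}) (\<lambda>_. ?U))) (crossing_prob a1 a2 b1 b2 n ({1..n} - {m})) \<eta>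
      = real_cond_exp (PiM {1..n} (\<lambda>_. ?U))
        (vimage_algebra (space (PiM {1..n} (\<lambda>_. ?U))) (\<lambda>\<eta>. restrict \<eta> {1..m - 1})
          (PiM {1..m - 1} (\<lambda>_. ?U))) (crossing_prob a1 a2 b1 b2 n ({1..n} - {m})) \<eta>"
  proof (rule real_cond_exp_PiM_restrict_irrelevant_coordinate[where c=1])
    show "crossing_prob a1 a2 b1 b2 n ({1..n} - {m}) \<in> borel_measurable (PiM {1..n} (\<lambda>_. ?U))"
      using borel_measurable_crossing_prob[of "{1..n} - {m}"] unfolding eta_space_def by simp
    show "crossing_prob a1 a2 b1 b2 n ({1..n} - {m}) (z(m := y))
        = crossing_prob a1 a2 b1 b2 n ({1..n} - {m}) z" for z y
      by (rule crossing_prob_cong_points) simp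
  qed (use assms(3,4) in \<open>auto simp: crossing_prob_def\<close>)
  ultimately show ?thesis unfolding filt_eq_vimage_restrict eta_space_def by simp
qed

theorem lemma2p4:
  fixes a1 a2 b1 b2 :: real and n m :: nat
  assumes "a1 < b1" and "a2 < b2" and "1 \<le> m" and "m \<le> n"
  shows "prob_space.variance (eta_space a1 a2 b1 b2 n)
           (\<lambda>\<eta>. qm a1 a2 b1 b2 n m \<eta> - qm a1 a2 b1 b2 n (m - 1) \<eta>)
         \<le> prob_space.expectation (eta_space a1 a2 b1 b2 n)
           (\<lambda>\<eta>. (infl a1 a2 b1 b2 n m \<eta>)\<^sup>2)"
proof -
  let ?q = "qeta a1 a2 b1 b2 n"
  let ?q_without_m = "crossing_prob a1 a2 b1 b2 n ({1..n} - {m})"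
  interpret prob_space "eta_space a1 a2 b1 b2 n"
    unfolding eta_space_def by (intro prob_space_PiM prob_space_uniform_rect assms(1,2))
  have measurable: "?q \<in> borel_measurable (eta_space a1 a2 b1 b2 n)"
    "?q_without_m \<in> borel_measurable (eta_space a1 a2 b1 b2 n)"
    unfolding qeta_eq_crossing_prob by (simp_all add: borel_measurable_crossing_prob)
  have bounded: "AE \<eta> in eta_space a1 a2 b1 b2 n. \<bar>crossing_prob a1 a2 b1 b2 n S \<eta>\<bar> \<le> 1" for S
    by (simp add: crossing_prob_def)
  then have "AE \<eta> in eta_space a1 a2 b1 b2 n. \<bar>?q \<eta>\<bar> \<le> 1"
    unfolding qeta_eq_crossing_prob .
  then have "variance (\<lambda>\<eta>. qm a1 a2 b1 b2 n m \<eta> - qm a1 a2 b1 b2 n (m - 1) \<eta>)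
      \<le> expectation (\<lambda>\<eta>. (?q \<eta> - ?q_without_m \<eta>)\<^sup>2)"
    unfolding qm_def using assms(3,4)
    by (intro variance_cond_exp_increment_le[OF _ _ _ measurable(1) _ measurable(2) bounded
        real_cond_exp_filt_crossing_prob_without[OF assms]] subalgebra_filt subalgebra_filt_mono) auto
  also have "\<dots> \<le> expectation (\<lambda>\<eta>. (infl a1 a2 b1 b2 n m \<eta>)\<^sup>2)"
    using abs_qeta_diff_le_infl[of m n] assms(3,4)
    by (intro integral_power2_le_of_abs_le[where c=1] measurable borel_measurable_diff
        borel_measurable_infl) (auto simp: infl_def)
  finally show ?thesis .
qed

end
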